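(* Let $n>2$, $\mathbf{A}=\{a_1,\dots,a_n\}$, and let $\mathbf{S}_2^n=\{XY : X,Y\in\mathbf{A}^*\setminus\{\emptyset\},\ \overline{\nu}(X)=\overline{\nu}(Y)\}$. Then $$L_{min}(\mathbf{S}_2^n)=4n-7.$$
   Context: A word over $\mathbf{A}$ is a finite sequence of letters; $\mathbf{A}^*$ is the set of all words. A subword is a block of consecutive letters. For a word $X$, the content vector is $\overline{\nu}(X)=(\nu_1(X),\dots,\nu_n(X))$, where $\nu_i(X)$ is the number of occurrences of $a_i$ in $X$. For $\mathbf{S}\subseteq\mathbf{A}^*$, a word is free from $\mathbf{S}$ if none of its subwords belongs to $\mathbf{S}$. A word $X$ free from $\mathbf{S}$ is crucial with respect to $\mathbf{S}$ if for every letter $a\in\mathbf{A}$ the word $Xa$ contains a subword belonging to $\mathbf{S}$. $L_{min}(\mathbf{S})$ is the smallest length of a crucial word with respect to $\mathbf{S}$. *)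

theory Defs
  imports Main "HOL-Library.Sublist"
begin

text \<open>The alphabet A = {a_1,...,a_n} is represented by the letters 0,...,n-1 (type nat);
  words are lists of letters.\<close>

definition alphabet :: "nat \<Rightarrow> nat set" where
  "alphabet n = {0..<n}"

definition words :: "nat \<Rightarrow> nat list set" where
  "words n = {w. set w \<subseteq> alphabet n}"

definition content :: "nat \<Rightarrow> nat list \<Rightarrow> nat list" where
  "content n X = map (\<lambda>i. count_list X i) [0..<n]"

definition S2 :: "nat \<Rightarrow> nat list set" where
  "S2 n = {X @ Y | X Y. X \<in> words n \<and> Y \<in> words n \<and> X \<noteq> [] \<and> Y \<noteq> []
                        \<and> content n X = content n Y}"

text \<open>Subword = block of consecutive letters (contiguous sublist).\<close>
definition free_from :: "nat list set \<Rightarrow> nat list \<Rightarrow> bool" where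
  "free_from S w \<longleftrightarrow> (\<forall>u. sublist u w \<longrightarrow> u \<notin> S)"

definition crucial :: "nat \<Rightarrow> nat list set \<Rightarrow> nat list \<Rightarrow> bool" where
  "crucial n S w \<longleftrightarrow> w \<in> words n \<and> free_from S w
     \<and> (\<forall>a\<in>alphabet n. \<exists>u. sublist u (w @ [a]) \<and> u \<in> S)"

definition L_min :: "nat \<Rightarrow> nat list set \<Rightarrow> nat" where
  "L_min n S = (LEAST k. \<exists>w. crucial n S w \<and> length w = k)"

end

theory Submission
  imports Defs "HOL-Library.Multiset"
begin

text \<open>
  If \<open>w\<close> is crucial, then for every letter \<open>a\<close> the word \<open>w a\<close> ends with an
  abelian square \<open>Y Z\<close>, \<open>|Y| = |Z| = h\<^sub>a\<close>; in the last \<open>2 h\<^sub>a - 1\<close> letters of \<open>w\<close> every letter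
  then occurs twice as often as in the last \<open>h\<^sub>a - 1\<close> letters, except \<open>a\<close>, which occurs once
  more. So the \<open>h\<^sub>a\<close> are distinct; let \<open>H = h\<^sub>z\<close> be the largest. In the last \<open>2H - 1\<close> letters
  \<open>z\<close> occurs an odd number of times, every other letter an even, positive number of times, and
  at most two letters exactly twice. Hence \<open>|w| \<ge> 2H - 1 \<ge> 1 + 2 \<cdot> 2 + 4 (n - 3) = 4n - 7\<close>.

  Over the letters \<open>0, \<dots>, m\<close>, \<open>n = m + 1\<close>, the word
  \<open>1 m 2 1 3 2 \<dots> (m-1) (m-2) 0 1 2 \<dots> (m-1) (m-2) \<dots> 1 0\<close> of length \<open>4m - 3\<close> is crucial.
  The sets of letters occurring an odd number of times in its prefixes are pairwise distinct, so
  no nonempty factor has only even letter counts, as an abelian square would; and appending any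
  letter creates an explicit abelian square suffix.
\<close>

lemma content_eq_iff_mset_eq:
  assumes "X \<in> words n" "Y \<in> words n"
  shows "content n X = content n Y \<longleftrightarrow> mset X = mset Y"
proof
  assume eq: "content n X = content n Y"
  show "mset X = mset Y"
  proof (rule multiset_eqI)
    fix c
    show "count (mset X) c = count (mset Y) c"
    proof (cases "c < n")
      case True
      then show ?thesis
        using arg_cong[where f = "\<lambda>v. v ! c", OF eq] by (simp add: content_def count_mset)
    next
      case False
      then have "c \<notin> set X" "c \<notin> set Y" using assms by (auto simp: words_def alphabet_def)
      then show ?thesis by (metis count_mset_0_iff)
    qed
  qed
next
  assume "mset X = mset Y"
  then show "content n X = content n Y" by (simp add: content_def flip: count_mset)
qed

lemma append_in_words_iff [simp]: "X @ Y \<in> words n \<longleftrightarrow> X \<in> words n \<and> Y \<in> words n"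
  by (auto simp: words_def)

lemma words_Suc_iff: "w \<in> words (Suc m) \<longleftrightarrow> (\<forall>x \<in> set w. x \<le> m)"
  by (auto simp: words_def alphabet_def less_Suc_eq_le)

lemma mem_S2_iff:
  "u \<in> S2 n \<longleftrightarrow> u \<in> words n \<and> (\<exists>Y Z. u = Y @ Z \<and> Y \<noteq> [] \<and> Z \<noteq> [] \<and> mset Y = mset Z)"
proof
  assume "u \<in> S2 n"
  then obtain Y Z where "u = Y @ Z" "Y \<in> words n" "Z \<in> words n" "Y \<noteq> []" "Z \<noteq> []"
    "content n Y = content n Z"
    unfolding S2_def by blast
  then show "u \<in> words n \<and> (\<exists>Y Z. u = Y @ Z \<and> Y \<noteq> [] \<and> Z \<noteq> [] \<and> mset Y = mset Z)"
    using content_eq_iff_mset_eq by auto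
next
  assume "u \<in> words n \<and> (\<exists>Y Z. u = Y @ Z \<and> Y \<noteq> [] \<and> Z \<noteq> [] \<and> mset Y = mset Z)"
  then obtain Y Z where "u = Y @ Z" "Y \<in> words n" "Z \<in> words n" "Y \<noteq> []" "Z \<noteq> []"
    "mset Y = mset Z"
    by auto
  then show "u \<in> S2 n"
    unfolding S2_def using content_eq_iff_mset_eq by blast
qed

lemma even_count_if_mem_S2: "u \<in> S2 n \<Longrightarrow> even (count_list u c)"
  by (auto simp: mem_S2_iff simp flip: count_mset)

definition odd_letters :: "nat list \<Rightarrow> nat set" where
  "odd_letters w = {c. odd (count_list w c)}"

lemma odd_letters_take_Suc:
  "k < length w \<Longrightarrow> c \<in> odd_letters (take (Suc k) w) \<longleftrightarrow> (c \<in> odd_letters (take k w)) \<noteq> (c = w ! k)"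
  by (auto simp: odd_letters_def take_Suc_conv_app_nth)

lemma free_from_S2_if_inj_on_prefix_odd_letters:
  assumes "inj_on (\<lambda>k. odd_letters (take k w)) {..length w}"
  shows "free_from (S2 n) w"
  unfolding free_from_def
proof (intro allI impI notI)
  fix u assume "sublist u w" and u: "u \<in> S2 n"
  then obtain p s where w: "w = p @ u @ s" by (auto simp: sublist_def)
  have "odd_letters (p @ u) = odd_letters p"
    using even_count_if_mem_S2[OF u] by (auto simp: odd_letters_def)
  then have "odd_letters (take (length p + length u) w) = odd_letters (take (length p) w)"
    by (simp add: w)
  moreover have "length p + length u \<in> {..length w}" "length p \<in> {..length w}" by (simp_all add: w)
  ultimately have "length p + length u = length p"
    by (rule inj_onD[OF assms])
  then show False using u by (auto simp: mem_S2_iff)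
qed

lemma upt_append: "i \<le> j \<Longrightarrow> j \<le> k \<Longrightarrow> [i..<k] = [i..<j] @ [j..<k]"
  by (metis le_add_diff_inverse upt_add_eq_append)

section \<open>Lower bound\<close>

definition suffix_count :: "nat list \<Rightarrow> nat \<Rightarrow> nat \<Rightarrow> nat" where
  "suffix_count w k c = count_list (drop (length w - k) w) c"

lemma count_list_drop_le: "count_list (drop i xs) c \<le> count_list xs c"
  by (metis append_take_drop_id count_list_append le_add2)

lemma suffix_count_mono: "k \<le> k' \<Longrightarrow> suffix_count w k c \<le> suffix_count w k' c"
  unfolding suffix_count_def
  by (metis count_list_drop_le diff_le_mono2 drop_drop le_add_diff_inverse2)

lemma sum_suffix_count:
  assumes "set w \<subseteq> A" "finite A"
  shows "(\<Sum>c\<in>A. suffix_count w k c) = min k (length w)"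
proof -
  have "set (drop (length w - k) w) \<subseteq> A" using assms(1) by (meson order_trans set_drop_subset)
  then show ?thesis unfolding suffix_count_def using sum_count_set[OF _ assms(2)] by simp
qed

text \<open>If \<open>w a\<close> ends with an abelian square \<open>Y Z\<close> with \<open>|Y| = |Z| = h\<close>, then the last \<open>2h - 1\<close>
  letters of \<open>w\<close> are \<open>Y\<close> followed by \<open>Z\<close> without its final letter \<open>a\<close>.\<close>
lemma crucial_imp_square_suffix_counts:
  assumes "crucial n (S2 n) w" "a < n"
  obtains h where "2 * h - 1 \<le> length w"
    "\<And>c. suffix_count w (2 * h - 1) c = 2 * suffix_count w (h - 1) c + of_bool (c = a)"
proof -
  have "a \<in> alphabet n" using assms(2) by (simp add: alphabet_def)
  then obtain u where u: "sublist u (w @ [a])" "u \<in> S2 n"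
    using assms(1) unfolding crucial_def by blast
  have "\<not> sublist u w" using assms(1) u(2) by (auto simp: crucial_def free_from_def)
  then have "suffix u (w @ [a])" using u(1) by (simp add: sublist_snoc)
  moreover obtain Y Z where YZ: "u = Y @ Z" "Y \<noteq> []" "Z \<noteq> []" "mset Y = mset Z"
    using u(2) by (auto simp: mem_S2_iff)
  moreover obtain Z' b where Z': "Z = Z' @ [b]" using YZ(3) by (metis rev_exhaust)
  ultimately have "b = a" "suffix (Y @ Z') w" by (auto simp: suffix_def)
  then obtain p where w: "w = p @ Y @ Z'" by (auto simp: suffix_def)
  define h where "h = length Y"
  have "length Z' = h - 1" using YZ(4) Z' h_def by (metis size_mset length_append_singleton diff_Suc_1)
  then have "drop (length w - (h - 1)) w = Z'" "drop (length w - (2 * h - 1)) w = Y @ Z'"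
    "2 * h - 1 \<le> length w"
    using w YZ(2) h_def by auto
  moreover have "count_list Y c = count_list Z' c + of_bool (c = a)" for c
  proof -
    have "count_list Y c = count_list Z c" using YZ(4) by (metis count_mset)
    then show ?thesis using Z' \<open>b = a\<close> by simp
  qed
  ultimately show ?thesis by (intro that[of h]) (simp_all add: suffix_count_def)
qed

lemma no_three_twice_occurring_letters:
  fixes h :: "nat \<Rightarrow> nat"
  assumes square: "\<And>a c. a \<in> {x, y, z} \<Longrightarrow>
      suffix_count w (2 * h a - 1) c = 2 * suffix_count w (h a - 1) c + of_bool (c = a)"
    and thin: "\<And>c. c \<in> {x, z} \<Longrightarrow>
      suffix_count w (H - 1) c = 1 \<and> suffix_count w (2 * H - 1) c = 2"
    and "h x < h y" "h y < h z" "h z \<le> H"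
  shows False
proof -
  txt \<open>The letter \<open>x\<close> occurs twice in the window of \<open>y\<close>'s square, so that window is longer
    than \<open>H - 1\<close> and contains \<open>z\<close>; but the count of \<open>z\<close> there is even and at most 1.\<close>
  have "x \<noteq> y" "y \<noteq> z" using \<open>h x < h y\<close> \<open>h y < h z\<close> by auto
  have xy: "2 * h x - 1 \<le> 2 * h y - 1" and yz: "2 * h y - 1 \<le> 2 * h z - 1"
    and zH: "2 * h z - 1 \<le> 2 * H - 1"
    using assms(3-5) by simp_all
  have x_once: "suffix_count w (2 * h x - 1) x = 1"
    using square[of x x] thin[of x] suffix_count_mono[OF order.trans[OF xy order.trans[OF yz zH]], of w x]
    by (simp; linarith)
  have "suffix_count w (2 * h y - 1) x = 2"
    using square[of y x] \<open>x \<noteq> y\<close> x_once thin[of x] suffix_count_mono[OF xy, of w x]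
      suffix_count_mono[OF order.trans[OF yz zH], of w x]
    by (simp; linarith)
  then have "H - 1 \<le> 2 * h y - 1"
    using thin[of x] suffix_count_mono[of "2 * h y - 1" "H - 1" w x] by fastforce
  then have "1 \<le> suffix_count w (2 * h y - 1) z"
    using thin[of z] suffix_count_mono[of "H - 1" "2 * h y - 1" w z] by simp
  moreover have "suffix_count w (2 * h z - 1) z \<le> 1"
    using square[of z z] thin[of z] suffix_count_mono[OF zH, of w z] by (simp; linarith)
  ultimately show False
    using square[of y z] \<open>y \<noteq> z\<close> suffix_count_mono[OF yz, of w z] by (simp; linarith)
qed

lemma card_twice_occurring_letters_le_2:
  fixes h :: "nat \<Rightarrow> nat"
  assumes "finite A" "z \<in> A" "h z = H"
    and square: "\<And>a c. a \<in> A \<Longrightarrow>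
      suffix_count w (2 * h a - 1) c = 2 * suffix_count w (h a - 1) c + of_bool (c = a)"
    and le_H: "\<And>a. a \<in> A \<Longrightarrow> h a \<le> H"
  shows "card {c \<in> A - {z}. suffix_count w (2 * H - 1) c = 2} \<le> 2"
proof -
  define T where "T = {c \<in> A - {z}. suffix_count w (2 * H - 1) c = 2}"
  have "T \<subseteq> A" "finite T" using \<open>finite A\<close> by (auto simp: T_def)
  have thin: "suffix_count w (H - 1) c = 1 \<and> suffix_count w (2 * H - 1) c = 2" if "c \<in> T" for c
    using that square[OF \<open>z \<in> A\<close>, of c] \<open>h z = H\<close> by (auto simp: T_def)
  have "inj_on h A"
  proof (rule inj_onI)
    fix a b assume "a \<in> A" "b \<in> A" "h a = h b"
    then show "a = b" using square[of a a] square[of b a] by (cases "a = b") auto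
  qed
  show ?thesis
  proof (cases "T = {}")
    case True
    then show ?thesis unfolding T_def[symmetric] by simp
  next
    case False
    have "Min (h ` T) \<in> h ` T" "Max (h ` T) \<in> h ` T"
      using \<open>finite T\<close> False by (simp_all add: Min_in Max_in)
    then obtain p q where p: "p \<in> T" "h p = Min (h ` T)" and q: "q \<in> T" "h q = Max (h ` T)"
      by (metis imageE)
    have "T \<subseteq> {p, q}"
    proof
      fix y assume y: "y \<in> T"
      show "y \<in> {p, q}"
      proof (rule ccontr)
        assume "y \<notin> {p, q}"
        then have "h p \<noteq> h y" "h y \<noteq> h q"
          using inj_onD[OF \<open>inj_on h A\<close>] p(1) q(1) y \<open>T \<subseteq> A\<close> by blast+
        moreover have "h p \<le> h y" "h y \<le> h q"
          using p(2) q(2) y \<open>finite T\<close> by simp_all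
        ultimately have "h p < h y" "h y < h q" by simp_all
        moreover have "p \<in> A" "y \<in> A" "q \<in> A" using p(1) q(1) y \<open>T \<subseteq> A\<close> by blast+
        ultimately show False
          using no_three_twice_occurring_letters[of p y q w h H] square le_H thin p(1) q(1) by blast
      qed
    qed
    then have "card T \<le> card {p, q}" by (simp add: card_mono)
    also have "\<dots> \<le> 2" by (simp add: card_insert_if)
    finally show ?thesis unfolding T_def .
  qed
qed

lemma sum_ge_if_few_twos:
  fixes W :: "'a \<Rightarrow> nat"
  assumes "finite A" "z \<in> A" "W z \<ge> 1"
    and even_ge_2: "\<And>c. c \<in> A - {z} \<Longrightarrow> even (W c) \<and> W c \<ge> 2"
    and "card {c \<in> A - {z}. W c = 2} \<le> 2"
  shows "4 * card A - 7 \<le> sum W A"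
proof -
  define T where "T = {c \<in> A - {z}. W c = 2}"
  have fin: "finite (A - {z})" "finite T" "T \<subseteq> A - {z}" using assms(1) by (auto simp: T_def)
  have "\<forall>c \<in> A - {z} - T. 4 \<le> W c"
    using even_ge_2 by (fastforce simp: T_def elim!: evenE)
  then have "4 * card (A - {z} - T) \<le> sum W (A - {z} - T)"
    using sum_bounded_below[of "A - {z} - T" 4 W] by (simp add: mult.commute)
  moreover have "sum W T = 2 * card T" by (simp add: T_def)
  moreover have "sum W A = W z + sum W T + sum W (A - {z} - T)"
    using assms(1,2) fin by (simp add: sum.remove sum.subset_diff)
  moreover have "card (A - {z} - T) = card A - 1 - card T"
    using assms(1,2) fin by (simp add: card_Diff_subset)
  moreover have "card T \<le> card A - 1" using assms(1,2) fin by (metis card_Diff_singleton card_mono)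
  ultimately show ?thesis using assms(3,5) unfolding T_def[symmetric] by linarith
qed

lemma crucial_length_ge:
  assumes crucial: "crucial n (S2 n) w"
  shows "4 * n - 7 \<le> length w"
proof (cases "n = 0")
  case False
  have "\<forall>a<n. \<exists>h. 2 * h - 1 \<le> length w \<and>
      (\<forall>c. suffix_count w (2 * h - 1) c = 2 * suffix_count w (h - 1) c + of_bool (c = a))"
    by (metis crucial_imp_square_suffix_counts[OF crucial])
  then obtain h where h_le: "\<And>a. a < n \<Longrightarrow> 2 * h a - 1 \<le> length w"
    and square: "\<And>a c. a < n \<Longrightarrow>
      suffix_count w (2 * h a - 1) c = 2 * suffix_count w (h a - 1) c + of_bool (c = a)"
    by metis
  define H where "H = Max (h ` {..<n})"
  obtain z where z: "z < n" "h z = H"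
    using Max_in[of "h ` {..<n}"] False unfolding H_def by fastforce
  have le_H: "\<And>a. a < n \<Longrightarrow> h a \<le> H" unfolding H_def by simp
  define W where "W c = suffix_count w (2 * H - 1) c" for c
  have W_z: "W c = 2 * suffix_count w (H - 1) c + of_bool (c = z)" for c
    using square[OF z(1)] z(2) by (simp add: W_def)
  have "even (W c) \<and> W c \<ge> 2" if "c \<in> {..<n} - {z}" for c
  proof -
    have "1 \<le> suffix_count w (2 * h c - 1) c" using square[of c c] that by simp
    also have "\<dots> \<le> W c" unfolding W_def using le_H[of c] that by (simp add: suffix_count_mono)
    finally show ?thesis using W_z[of c] that by auto
  qed
  moreover have "card {c \<in> {..<n} - {z}. W c = 2} \<le> 2"
    unfolding W_def using z
    by (intro card_twice_occurring_letters_le_2[where h = h])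
      (simp_all only: lessThan_iff square le_H finite_lessThan)
  moreover have "W z \<ge> 1" using W_z by simp
  ultimately have "4 * card {..<n} - 7 \<le> sum W {..<n}"
    using z(1) by (intro sum_ge_if_few_twos) simp_all
  also have "sum W {..<n} = 2 * H - 1"
  proof -
    have "set w \<subseteq> {..<n}" using crucial by (auto simp: crucial_def words_def alphabet_def)
    then show ?thesis using h_le[OF z(1)] z(2) unfolding W_def by (simp add: sum_suffix_count)
  qed
  finally show ?thesis using h_le[OF z(1)] z(2) by simp
qed simp

section \<open>A crucial word of length \<open>4n - 7\<close>\<close>

definition down_pairs :: "nat \<Rightarrow> nat \<Rightarrow> nat list" where
  "down_pairs i j = concat (map (\<lambda>k. [Suc k, k]) [i..<j])"

lemma down_pairs_Suc: "i \<le> j \<Longrightarrow> down_pairs i (Suc j) = down_pairs i j @ [Suc j, j]"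
  by (simp add: down_pairs_def)

lemma length_down_pairs [simp]: "length (down_pairs i j) = 2 * (j - i)"
  by (induction j) (auto simp: down_pairs_def)

lemma nth_down_pairs:
  "t < 2 * (j - i) \<Longrightarrow> down_pairs i j ! t = (if even t then i + t div 2 + 1 else i + t div 2)"
proof (induction j arbitrary: t)
  case (Suc j)
  then have "i \<le> j" by simp
  show ?case
  proof (cases "t < 2 * (j - i)")
    case True
    then show ?thesis using Suc down_pairs_Suc[OF \<open>i \<le> j\<close>] by (simp add: nth_append)
  next
    case False
    then have "t = 2 * (j - i) \<or> t = 2 * (j - i) + 1" using Suc.prems \<open>i \<le> j\<close> by auto
    then show ?thesis using down_pairs_Suc[OF \<open>i \<le> j\<close>] \<open>i \<le> j\<close> by (auto simp: nth_append)
  qed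
qed simp

lemma mset_down_pairs: "mset (down_pairs i j) = mset [Suc i..<Suc j] + mset [i..<j]"
  by (induction j) (auto simp: down_pairs_def)

lemma set_down_pairs: "x \<in> set (down_pairs i j) \<Longrightarrow> x \<le> j"
  by (auto simp: down_pairs_def)

lemma down_pairs_append: "i \<le> j \<Longrightarrow> j \<le> k \<Longrightarrow> down_pairs i k = down_pairs i j @ down_pairs j k"
  unfolding down_pairs_def by (simp add: upt_append[of i j k])

definition witness_word :: "nat \<Rightarrow> nat list" where
  "witness_word m = [1, m] @ down_pairs 1 (m - 1) @ [0] @ [1..<m] @ rev [0..<m - 1]"

lemma length_witness_word: "m \<ge> 2 \<Longrightarrow> length (witness_word m) = 4 * m - 3"
  by (simp add: witness_word_def)

lemma witness_word_in_words: "m \<ge> 1 \<Longrightarrow> witness_word m \<in> words (Suc m)"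
  by (auto simp: words_Suc_iff witness_word_def dest: set_down_pairs)

definition witness_letter :: "nat \<Rightarrow> nat \<Rightarrow> nat" where
  "witness_letter m k =
    (if k = 0 then 1 else if k = 1 then m
     else if k \<le> 2 * m - 3 then (if even k then k div 2 + 1 else k div 2)
     else if k = 2 * m - 2 then 0
     else if k \<le> 3 * m - 3 then k - (2 * m - 2)
     else 4 * m - 4 - k)"

lemma witness_letter_pairs:
  "2 \<le> k \<Longrightarrow> k \<le> 2 * m - 3 \<Longrightarrow> witness_letter m k = (if even k then k div 2 + 1 else k div 2)"
  by (simp add: witness_letter_def)

lemma witness_letter_middle: "m \<ge> 2 \<Longrightarrow> witness_letter m (2 * m - 2) = 0"
  by (auto simp: witness_letter_def)

lemma witness_letter_ascent:
  "2 * m - 2 < k \<Longrightarrow> k \<le> 3 * m - 3 \<Longrightarrow> m \<ge> 2 \<Longrightarrow> witness_letter m k = k - (2 * m - 2)"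
  by (auto simp: witness_letter_def)

lemma witness_letter_descent:
  "3 * m - 3 < k \<Longrightarrow> m \<ge> 2 \<Longrightarrow> witness_letter m k = 4 * m - 4 - k"
  by (auto simp: witness_letter_def)

lemma nth_witness_word:
  assumes m: "m \<ge> 2" and k: "k < 4 * m - 3"
  shows "witness_word m ! k = witness_letter m k"
proof -
  consider "k \<le> 1" | "2 \<le> k" "k \<le> 2 * m - 3" | "k = 2 * m - 2" | "2 * m - 1 \<le> k" "k \<le> 3 * m - 3"
    | "3 * m - 2 \<le> k" by linarith
  then show ?thesis
  proof cases
    case 1
    then show ?thesis using m by (auto simp: witness_word_def witness_letter_def)
  next
    case 2
    define t where "t = k - 2"
    have t: "k = Suc (Suc t)" "t < length (down_pairs 1 (m - 1))" using 2 by (simp_all add: t_def)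
    then have "witness_word m ! k = down_pairs 1 (m - 1) ! t"
      by (simp add: witness_word_def nth_append del: length_down_pairs)
    also have "\<dots> = witness_letter m k"
      using 2 t by (auto simp: nth_down_pairs witness_letter_pairs elim!: evenE oddE)
    finally show ?thesis .
  next
    case 3
    have "witness_word m = ([1, m] @ down_pairs 1 (m - 1)) @ 0 # [1..<m] @ rev [0..<m - 1]"
      by (simp add: witness_word_def)
    moreover have "length ([1, m] @ down_pairs 1 (m - 1)) = k" using 3 m by simp
    ultimately show ?thesis using 3 witness_letter_middle[OF m] by (metis nth_append_length)
  next
    case 4
    define t where "t = k - (2 * m - 1)"
    have "witness_word m = ([1, m] @ down_pairs 1 (m - 1) @ [0]) @ [1..<m] @ rev [0..<m - 1]"
      by (simp add: witness_word_def)
    moreover have "length ([1, m] @ down_pairs 1 (m - 1) @ [0]) = 2 * m - 1" using m by simp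
    moreover have "k = (2 * m - 1) + t" "t < length [1..<m]" using 4 m by (simp_all add: t_def)
    ultimately have "witness_word m ! k = [1..<m] ! t" by (metis nth_append nth_append_length_plus)
    then show ?thesis using 4 m \<open>t < length [1..<m]\<close> by (simp add: t_def witness_letter_ascent)
  next
    case 5
    define t where "t = k - (3 * m - 2)"
    have "witness_word m = ([1, m] @ down_pairs 1 (m - 1) @ [0] @ [1..<m]) @ rev [0..<m - 1]"
      by (simp add: witness_word_def)
    moreover have "length ([1, m] @ down_pairs 1 (m - 1) @ [0] @ [1..<m]) = 3 * m - 2" using m by simp
    moreover have "k = (3 * m - 2) + t" "t < m - 1" using 5 k by (simp_all add: t_def)
    ultimately have "witness_word m ! k = rev [0..<m - 1] ! t" by (metis nth_append_length_plus)
    then show ?thesis using 5 m \<open>t < m - 1\<close> by (simp add: t_def rev_nth witness_letter_descent)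
  qed
qed

definition witness_parity :: "nat \<Rightarrow> nat \<Rightarrow> nat set" where
  "witness_parity m k =
    (if k = 0 then {} else if k = 1 then {1}
     else if k \<le> 2 * m - 2 then (if even k then {k div 2, m} else {k div 2, k div 2 + 1, m})
     else if k \<le> 3 * m - 3 then {0..k - (2 * m - 1)} \<union> {m - 1, m}
     else {0..<4 * m - 3 - k} \<union> {m})"

lemma witness_parity_pairs:
  "2 \<le> k \<Longrightarrow> k \<le> 2 * m - 2 \<Longrightarrow>
    witness_parity m k = (if even k then {k div 2, m} else {k div 2, k div 2 + 1, m})"
  by (simp add: witness_parity_def)

lemma witness_parity_ascent:
  "2 * m - 2 < k \<Longrightarrow> k \<le> 3 * m - 3 \<Longrightarrow> witness_parity m k = {0..k - (2 * m - 1)} \<union> {m - 1, m}"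
  by (simp add: witness_parity_def)

lemma witness_parity_descent:
  "3 * m - 3 < k \<Longrightarrow> m \<ge> 2 \<Longrightarrow> witness_parity m k = {0..<4 * m - 3 - k} \<union> {m}"
  by (auto simp: witness_parity_def)

lemma witness_parity_Suc_head:
  assumes m: "m \<ge> 2" and k: "k \<le> 2 * m - 3"
  shows "c \<in> witness_parity m (Suc k) \<longleftrightarrow> (c \<in> witness_parity m k) \<noteq> (c = witness_letter m k)"
proof -
  consider "k = 0" | "k = 1" | "2 \<le> k" "even k" | "2 \<le> k" "odd k" by linarith
  then show ?thesis
  proof cases
    case 1
    then show ?thesis by (auto simp: witness_parity_def witness_letter_def)
  next
    case 2
    then show ?thesis using m by (auto simp: witness_parity_def witness_letter_def)
  next
    case 3
    then obtain b where "k = 2 * b" by (elim evenE)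
    then have "witness_parity m k = {b, m}" "witness_parity m (Suc k) = {b, b + 1, m}"
      "witness_letter m k = b + 1" "b + 1 < m"
      using 3 k by (simp_all add: witness_parity_pairs witness_letter_pairs)
    then show ?thesis by auto
  next
    case 4
    then obtain b where "k = 2 * b + 1" by (elim oddE)
    then have "witness_parity m k = {b, b + 1, m}" "witness_parity m (Suc k) = {b + 1, m}"
      "witness_letter m k = b" "b + 1 < m"
      using 4 k by (simp_all add: witness_parity_pairs witness_letter_pairs)
    then show ?thesis by auto
  qed
qed

lemma witness_parity_Suc_tail:
  assumes m: "m \<ge> 2" and k: "2 * m - 2 \<le> k" "k < 4 * m - 3"
  shows "c \<in> witness_parity m (Suc k) \<longleftrightarrow> (c \<in> witness_parity m k) \<noteq> (c = witness_letter m k)"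
proof -
  consider "k = 2 * m - 2" | "2 * m - 2 < k" "k < 3 * m - 3" | "k = 3 * m - 3" | "3 * m - 3 < k"
    using k by linarith
  then show ?thesis
  proof cases
    case 1
    then have "witness_parity m k = {m - 1, m}" "witness_parity m (Suc k) = {0, m - 1, m}"
      "witness_letter m k = 0"
      using m by (auto simp: witness_parity_pairs witness_parity_ascent witness_letter_middle)
    then show ?thesis using m by auto
  next
    case 2
    define t where "t = k - (2 * m - 1)"
    have "witness_parity m k = {0..t} \<union> {m - 1, m}"
      "witness_parity m (Suc k) = {0..Suc t} \<union> {m - 1, m}"
      "witness_letter m k = Suc t" "Suc t < m - 1"
      using 2 m by (simp_all add: t_def witness_parity_ascent witness_letter_ascent Suc_diff_le)
    then show ?thesis by auto
  next
    case 3
    then have "witness_parity m k = {0..m - 2} \<union> {m - 1, m}"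
      "witness_parity m (Suc k) = {0..<m - 1} \<union> {m}" "witness_letter m k = m - 1"
      using m by (simp_all add: witness_parity_ascent witness_parity_descent witness_letter_ascent)
    then show ?thesis using m by auto
  next
    case 4
    define s where "s = 4 * m - 4 - k"
    have s: "4 * m - 3 - k = Suc s" "4 * m - 3 - Suc k = s" "s < m"
      using 4 k unfolding s_def by linarith+
    have "witness_parity m k = {0..<Suc s} \<union> {m}" "witness_parity m (Suc k) = {0..<s} \<union> {m}"
      "witness_letter m k = s"
      using 4 m witness_parity_descent[of m k] witness_parity_descent[of m "Suc k"]
        witness_letter_descent[of m k] s(1,2)
      by (simp_all add: s_def)
    then show ?thesis using s(3) by auto
  qed
qed

lemma odd_letters_take_witness_word:
  assumes m: "m \<ge> 2"
  shows "k \<le> 4 * m - 3 \<Longrightarrow> odd_letters (take k (witness_word m)) = witness_parity m k"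
proof (induction k)
  case 0
  then show ?case by (simp add: odd_letters_def witness_parity_def)
next
  case (Suc k)
  then have k: "k < 4 * m - 3" by simp
  show ?case
  proof (rule set_eqI)
    fix c
    have "c \<in> odd_letters (take (Suc k) (witness_word m)) \<longleftrightarrow>
        (c \<in> witness_parity m k) \<noteq> (c = witness_letter m k)"
      using odd_letters_take_Suc[of k "witness_word m" c] Suc k
      by (simp add: length_witness_word[OF m] nth_witness_word[OF m k])
    also have "\<dots> \<longleftrightarrow> c \<in> witness_parity m (Suc k)"
      using witness_parity_Suc_head[OF m] witness_parity_Suc_tail[OF m _ k]
      by (cases "k \<le> 2 * m - 3") auto
    finally show "c \<in> odd_letters (take (Suc k) (witness_word m)) \<longleftrightarrow> c \<in> witness_parity m (Suc k)" .
  qed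
qed

definition parity_index :: "nat \<Rightarrow> nat set \<Rightarrow> nat" where
  "parity_index m S =
    (if m \<notin> S then card S
     else if 0 \<notin> S \<and> 2 \<le> card S then 2 * Min (S - {m}) + card S - 2
     else if 0 \<in> S \<and> m - 1 \<in> S then card S + 2 * m - 4
     else 4 * m - 2 - card S)"

lemma parity_index_witness_parity:
  assumes m: "m \<ge> 2" and k: "k \<le> 4 * m - 3"
  shows "parity_index m (witness_parity m k) = k"
proof -
  consider "k = 0" | "k = 1" | "2 \<le> k" "k \<le> 2 * m - 2" "even k" | "2 \<le> k" "k \<le> 2 * m - 2" "odd k"
    | "2 * m - 2 < k" "k \<le> 3 * m - 3" | "3 * m - 3 < k" by linarith
  then show ?thesis
  proof cases
    case 1
    then show ?thesis by (simp add: witness_parity_def parity_index_def)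
  next
    case 2
    then show ?thesis using m by (simp add: witness_parity_def parity_index_def)
  next
    case 3
    then obtain b where b: "k = 2 * b" by (elim evenE)
    moreover have "1 \<le> b" "b < m" using 3 b by linarith+
    ultimately show ?thesis using 3 by (simp add: witness_parity_pairs parity_index_def insert_Diff_if)
  next
    case 4
    then obtain b where b: "k = 2 * b + 1" by (elim oddE)
    moreover have "1 \<le> b" "b + 1 < m" using 4 b by linarith+
    ultimately show ?thesis using 4 by (simp add: witness_parity_pairs parity_index_def insert_Diff_if)
  next
    case 5
    define t where "t = k - (2 * m - 1)"
    have "witness_parity m k = insert (m - 1) (insert m {0..t})" "t < m - 1"
      using 5 m by (auto simp: t_def witness_parity_ascent)
    then show ?thesis using 5 m by (simp add: parity_index_def t_def)
  next
    case 6
    define s where "s = 4 * m - 3 - k"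
    have "witness_parity m k = insert m {0..<s}" "s \<le> m - 1"
      using 6 m by (auto simp: s_def witness_parity_descent)
    then show ?thesis using 6 m k by (cases s) (auto simp: parity_index_def s_def)
  qed
qed

lemma witness_word_snoc_middle:
  assumes "1 \<le> a" "a < m"
  defines "U \<equiv> down_pairs a (m - 1) @ [0] @ [1..<Suc a]"
    and "V \<equiv> [Suc a..<m] @ rev [0..<m - 1] @ [a]"
  shows "witness_word m @ [a] = ([1, m] @ down_pairs 1 a) @ U @ V" "mset U = mset V"
proof -
  have "down_pairs 1 (m - 1) = down_pairs 1 a @ down_pairs a (m - 1)"
    using assms(1,2) by (intro down_pairs_append) simp_all
  moreover have "[1..<m] = [1..<Suc a] @ [Suc a..<m]" using assms(1,2) by (intro upt_append) simp_all
  ultimately show "witness_word m @ [a] = ([1, m] @ down_pairs 1 a) @ U @ V"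
    unfolding witness_word_def U_def V_def by simp
  have "[0..<m - 1] = [0] @ [1..<m - 1]" using assms(1,2) by (simp add: upt_conv_Cons)
  also have "[1..<m - 1] = [1..<a] @ [a..<m - 1]" using assms(1,2) by (intro upt_append) simp_all
  finally have "mset [0..<m - 1] = {#0#} + mset [1..<a] + mset [a..<m - 1]" by simp
  moreover have "mset [1..<Suc a] = mset [1..<a] + {#a#}" using assms(1) by simp
  moreover have "Suc (m - 1) = m" using assms(2) by simp
  ultimately show "mset U = mset V"
    unfolding U_def V_def mset_append mset_down_pairs by (simp add: ac_simps del: mset_upt upt_Suc)
qed

lemma witness_word_snoc_top:
  assumes "m \<ge> 2"
  defines "U \<equiv> [1, m] @ down_pairs 1 (m - 1) @ [0]"
    and "V \<equiv> [1..<m] @ rev [0..<m - 1] @ [m]"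
  shows "witness_word m @ [m] = U @ V" "mset U = mset V"
proof -
  show "witness_word m @ [m] = U @ V" by (simp add: witness_word_def U_def V_def)
  have "mset [1..<m] = {#1#} + mset [Suc 1..<m]" using assms(1) by (simp add: upt_conv_Cons)
  moreover have "mset [0..<m - 1] = {#0#} + mset [1..<m - 1]" using assms(1) by (simp add: upt_conv_Cons)
  moreover have "Suc (m - 1) = m" using assms(1) by simp
  ultimately show "mset U = mset V"
    unfolding U_def V_def mset_append mset_down_pairs by (simp add: ac_simps del: mset_upt upt_Suc)
qed

lemma witness_word_snoc_abelian_square:
  assumes "m \<ge> 2" "a \<le> m"
  obtains p U V where "witness_word m @ [a] = p @ U @ V" "U \<noteq> []" "V \<noteq> []" "mset U = mset V"
proof -
  consider "a = 0" | "1 \<le> a" "a < m" | "a = m" using assms(2) by linarith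
  then show ?thesis
  proof cases
    case 1
    have "[0..<m - 1] = 0 # [1..<m - 1]" using assms(1) by (simp add: upt_conv_Cons)
    then have "witness_word m @ [a] =
        ([1, m] @ down_pairs 1 (m - 1) @ [0] @ [1..<m] @ rev [1..<m - 1]) @ [0] @ [0]"
      using 1 by (simp add: witness_word_def)
    then show ?thesis by (rule that) simp_all
  next
    case 2
    let ?U = "down_pairs a (m - 1) @ [0] @ [1..<Suc a]" and ?V = "[Suc a..<m] @ rev [0..<m - 1] @ [a]"
    show ?thesis
      using witness_word_snoc_middle[OF 2] by (intro that[of "[1, m] @ down_pairs 1 a" ?U ?V]) simp_all
  next
    case 3
    let ?U = "[1, m] @ down_pairs 1 (m - 1) @ [0]" and ?V = "[1..<m] @ rev [0..<m - 1] @ [m]"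
    show ?thesis
      using witness_word_snoc_top[OF assms(1)] 3 by (intro that[of "[]" ?U ?V]) simp_all
  qed
qed

lemma inj_on_prefix_odd_letters_witness_word:
  assumes "m \<ge> 2"
  shows "inj_on (\<lambda>k. odd_letters (take k (witness_word m))) {..length (witness_word m)}"
  by (rule inj_on_inverseI[where g = "parity_index m"])
    (simp add: length_witness_word[OF assms] odd_letters_take_witness_word[OF assms]
      parity_index_witness_parity[OF assms])

lemma crucial_witness_word:
  assumes "m \<ge> 2"
  shows "crucial (Suc m) (S2 (Suc m)) (witness_word m)"
  unfolding crucial_def
proof (intro conjI ballI)
  show "witness_word m \<in> words (Suc m)" using assms by (simp add: witness_word_in_words)
  show "free_from (S2 (Suc m)) (witness_word m)"
    by (rule free_from_S2_if_inj_on_prefix_odd_letters[OF inj_on_prefix_odd_letters_witness_word[OF assms]])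
next
  fix a assume "a \<in> alphabet (Suc m)"
  then have a: "a \<le> m" by (simp add: alphabet_def)
  then obtain p U V where w: "witness_word m @ [a] = p @ U @ V" "U \<noteq> []" "V \<noteq> []" "mset U = mset V"
    using witness_word_snoc_abelian_square[OF assms] by blast
  have "witness_word m @ [a] \<in> words (Suc m)"
    using a assms witness_word_in_words[of m] by (simp add: words_Suc_iff)
  then have "U @ V \<in> S2 (Suc m)" using w by (auto simp: mem_S2_iff)
  moreover have "sublist (U @ V) (witness_word m @ [a])"
    unfolding w(1) by (metis append_Nil2 sublist_appendI)
  ultimately show "\<exists>u. sublist u (witness_word m @ [a]) \<and> u \<in> S2 (Suc m)" by blast
qed

theorem theorem2:
  fixes n :: nat
  assumes "n > 2"
  shows "L_min n (S2 n) = 4 * n - 7"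
proof -
  define m where "m = n - 1"
  have m: "m \<ge> 2" "n = Suc m" using assms by (simp_all add: m_def)
  have "crucial n (S2 n) (witness_word m)" "length (witness_word m) = 4 * n - 7"
    using crucial_witness_word[OF m(1)] length_witness_word[OF m(1)] m(2) by simp_all
  then show ?thesis
    unfolding L_min_def by (intro Least_equality) (auto intro: crucial_length_ge)
qed

end
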